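(* For any generic simple closed curve $\gamma$, the attraction diagram of $\gamma$ and the dual attraction diagram of $\gamma$ contain the same number of essential critical cycles.
   Context: $\gamma\colon S^1\to\mathbb{R}^2$ is a simple regular $C^3$ closed curve parametrized by arc length. A configuration is a pair $(x,y)\in S^1\times S^1$ (human at $\gamma(x)$, puppy at $\gamma(y)$); $D(x,y)=\|\gamma(x)-\gamma(y)\|$. A configuration is critical if $\frac{\partial}{\partial y}D(x,y)=0$ (the main diagonal $x=y$ consisting of critical configurations); critical configurations are stable ($\partial_y^2D>0$), unstable ($\partial_y^2D<0$) or pivot ($\partial_y^2D=0$, $\partial_y^3D\neq0$). Genericity means: finitely many critical configurations for each fixed $x$ and each fixed $y$; every critical configuration is of one of these types; finitely many pivot configurations; $\gamma$ meets its evolute transversely away from its cusps; and the critical set is a union of finitely many pairwise disjoint simple closed curves (critical cycles). The attraction diagram is the decomposition of the torus by the critical set; a critical cycle there is contractible if it bounds a simply connected subset of the torus and essential otherwise. Let $\ell(x,y)$ be the signed distance from $\gamma(x)$ to the directed tangent line to $\gamma$ at $\gamma(y)$ (direction $\gamma'(y)$), positive if $\gamma(x)$ lies to the left of it and negative if to the right. Let $L\colon S^1\times S^1\to S^1\times\mathbb{R}$, $L(x,y)=(y,\ell(x,y))$. The dual attraction diagram is the decomposition of the cylinder $S^1\times\mathbb{R}$ by the set $\{L(x,y): (x,y)\text{ critical}\}$; its critical cycles are the images under $L$ of the critical cycles of the attraction diagram, and such a cycle is essential if it is not contractible in the cylinder. *)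

theory Defs
  imports "HOL-Analysis.Analysis"
begin

text \<open>The curve is modelled as an L-periodic map gamma : real => complex (so S^1 = R / L Z,
 identified with the unit circle via t |-> cis (2 pi t / L)); the plane R^2 is identified with C.\<close>

definition dgam :: "(real \<Rightarrow> complex) \<Rightarrow> nat \<Rightarrow> real \<Rightarrow> complex" where
  "dgam \<gamma> k = ((\<lambda>f t. vector_derivative f (at t)) ^^ k) \<gamma>"

definition simple_closed_C3_arclength :: "real \<Rightarrow> (real \<Rightarrow> complex) \<Rightarrow> bool" where
  "simple_closed_C3_arclength L \<gamma> \<longleftrightarrow>
     L > 0 \<and> (\<forall>t. \<gamma> (t + L) = \<gamma> t) \<and> inj_on \<gamma> {0..<L} \<and>
     (\<forall>k<3. \<forall>t. (dgam \<gamma> k has_vector_derivative dgam \<gamma> (Suc k) t) (at t)) \<and>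
     continuous_on UNIV (dgam \<gamma> 3) \<and>
     (\<forall>t. norm (dgam \<gamma> 1 t) = 1)"

definition Dist :: "(real \<Rightarrow> complex) \<Rightarrow> real \<Rightarrow> real \<Rightarrow> real" where
  "Dist \<gamma> x y = norm (\<gamma> x - \<gamma> y)"

definition dyD :: "(real \<Rightarrow> complex) \<Rightarrow> nat \<Rightarrow> real \<Rightarrow> real \<Rightarrow> real" where
  "dyD \<gamma> k x y = (deriv ^^ k) (\<lambda>t. Dist \<gamma> x t) y"

definition same_point :: "real \<Rightarrow> real \<Rightarrow> real \<Rightarrow> bool" where
  "same_point L x y \<longleftrightarrow> (\<exists>k::int. y = x + of_int k * L)"

definition critical :: "real \<Rightarrow> (real \<Rightarrow> complex) \<Rightarrow> real \<Rightarrow> real \<Rightarrow> bool" where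
  "critical L \<gamma> x y \<longleftrightarrow> same_point L x y \<or> ((\<lambda>t. Dist \<gamma> x t) has_real_derivative 0) (at y)"

definition stable_conf where
  "stable_conf L \<gamma> x y \<longleftrightarrow> critical L \<gamma> x y \<and> dyD \<gamma> 2 x y > 0"
definition unstable_conf where
  "unstable_conf L \<gamma> x y \<longleftrightarrow> critical L \<gamma> x y \<and> dyD \<gamma> 2 x y < 0"
definition pivot_conf where
  "pivot_conf L \<gamma> x y \<longleftrightarrow> critical L \<gamma> x y \<and> dyD \<gamma> 2 x y = 0 \<and> dyD \<gamma> 3 x y \<noteq> 0"

text \<open>signed curvature, evolute (defined where the curvature is nonzero), its cusps are where
 the derivative of the curvature vanishes\<close>
definition curv :: "(real \<Rightarrow> complex) \<Rightarrow> real \<Rightarrow> real" where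
  "curv \<gamma> t = Im (cnj (dgam \<gamma> 1 t) * dgam \<gamma> 2 t)"
definition evolute :: "(real \<Rightarrow> complex) \<Rightarrow> real \<Rightarrow> complex" where
  "evolute \<gamma> t = \<gamma> t + (\<i> * dgam \<gamma> 1 t) / complex_of_real (curv \<gamma> t)"

definition meets_evolute_transversely :: "real \<Rightarrow> (real \<Rightarrow> complex) \<Rightarrow> bool" where
  "meets_evolute_transversely L \<gamma> \<longleftrightarrow>
     (\<forall>s t. curv \<gamma> t \<noteq> 0 \<and> deriv (curv \<gamma>) t \<noteq> 0 \<and> \<gamma> s = evolute \<gamma> t \<longrightarrow>
        Im (cnj (dgam \<gamma> 1 s) * vector_derivative (evolute \<gamma>) (at t)) \<noteq> 0)"

definition torus :: "(complex \<times> complex) set" where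
  "torus = sphere 0 1 \<times> sphere 0 1"
definition cylinder :: "(complex \<times> real) set" where
  "cylinder = sphere 0 1 \<times> UNIV"
definition circ :: "real \<Rightarrow> real \<Rightarrow> complex" where
  "circ L x = cis (2 * pi * x / L)"
definition Etor :: "real \<Rightarrow> real \<times> real \<Rightarrow> complex \<times> complex" where
  "Etor L p = (circ L (fst p), circ L (snd p))"

definition crit_set :: "real \<Rightarrow> (real \<Rightarrow> complex) \<Rightarrow> (complex \<times> complex) set" where
  "crit_set L \<gamma> = Etor L ` {(x, y). critical L \<gamma> x y}"

definition generic :: "real \<Rightarrow> (real \<Rightarrow> complex) \<Rightarrow> bool" where
  "generic L \<gamma> \<longleftrightarrow>
     (\<forall>x. finite {y \<in> {0..<L}. critical L \<gamma> x y}) \<and>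
     (\<forall>y. finite {x \<in> {0..<L}. critical L \<gamma> x y}) \<and>
     (\<forall>x y. critical L \<gamma> x y \<and> \<not> same_point L x y \<longrightarrow>
        stable_conf L \<gamma> x y \<or> unstable_conf L \<gamma> x y \<or> pivot_conf L \<gamma> x y) \<and>
     finite {(x, y). x \<in> {0..<L} \<and> y \<in> {0..<L} \<and> pivot_conf L \<gamma> x y} \<and>
     meets_evolute_transversely L \<gamma> \<and>
     (\<exists>\<C>. finite \<C> \<and> disjoint \<C> \<and> (\<forall>C\<in>\<C>. C homeomorphic (sphere (0::complex) 1)) \<and>
          \<Union>\<C> = crit_set L \<gamma>)"

definition crit_cycles :: "real \<Rightarrow> (real \<Rightarrow> complex) \<Rightarrow> (complex \<times> complex) set set" where
  "crit_cycles L \<gamma> = components (crit_set L \<gamma>)"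

text \<open>contractible = bounds a simply connected subset of the torus (a union of components of the
 complement, i.e. a relatively open set whose frontier is the cycle)\<close>
definition contractible_in_torus :: "(complex \<times> complex) set \<Rightarrow> bool" where
  "contractible_in_torus C \<longleftrightarrow>
     (\<exists>U. openin (top_of_set torus) U \<and> simply_connected U \<and> closure U - U = C)"

definition ell :: "(real \<Rightarrow> complex) \<Rightarrow> real \<Rightarrow> real \<Rightarrow> real" where
  "ell \<gamma> x y =
     (if Im (cnj (dgam \<gamma> 1 y) * (\<gamma> x - \<gamma> y)) \<ge> 0 then 1 else -1) *
     infdist (\<gamma> x) {\<gamma> y + of_real s * dgam \<gamma> 1 y | s. True}"

text \<open>L on the torus: (u,v) = (circ x, circ y) |-> (circ y, ell x y)\<close>
definition Ltor :: "real \<Rightarrow> (real \<Rightarrow> complex) \<Rightarrow> complex \<times> complex \<Rightarrow> complex \<times> real" where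
  "Ltor L \<gamma> z = (snd z, ell \<gamma> (SOME x. circ L x = fst z) (SOME y. circ L y = snd z))"

text \<open>the image under L of a critical cycle C (parametrised by a homeomorphism from the circle)
 is essential iff that loop is not null-homotopic in the cylinder\<close>
definition dual_essential :: "real \<Rightarrow> (real \<Rightarrow> complex) \<Rightarrow> (complex \<times> complex) set \<Rightarrow> bool" where
  "dual_essential L \<gamma> C \<longleftrightarrow>
     (\<exists>p q. homeomorphism (sphere (0::complex) 1) C p q \<and>
        \<not> (\<exists>c. homotopic_with_canon (\<lambda>_. True) (sphere 0 1) cylinder (Ltor L \<gamma> \<circ> p) (\<lambda>_. c)))"

end

theory Submission
  imports Defs "HOL-Complex_Analysis.Riemann_Mapping" "HOL-Library.Periodic_Fun" "HOL-Library.Real_Mod"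
begin

text \<open>Both properties of a critical cycle \<open>C\<close> turn out to be equivalent to the puppy coordinate
  \<open>(u, v) \<mapsto> v\<close> restricted to \<open>C\<close> being an essential map \<open>C \<rightarrow> S\<^sup>1\<close>.

  On the dual side this holds because \<open>L = (v, \<ell>)\<close> and the factor \<open>\<real>\<close> of the cylinder is
  contractible. On the torus, the diagonal is a critical cycle, essential and not contractible.
  Its complement is homeomorphic to the punctured plane, the puppy coordinate becoming \<open>z / |z|\<close>,
  so every other cycle becomes a Jordan curve \<open>J\<close> in \<open>\<complex> - {0}\<close>, and by Borsuk's theorem the
  map is essential iff \<open>0\<close> lies inside \<open>J\<close>. If it does, the complement of \<open>C\<close> is connected and
  contains the diagonal loop, so \<open>C\<close> bounds no simply connected region; otherwise the image of
  the inside of \<open>J\<close> is a disc bounded by \<open>C\<close>.\<close>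

section \<open>Nullhomotopic maps and circles\<close>

definition nullhomotopic :: "'a::topological_space set \<Rightarrow> 'b::topological_space set \<Rightarrow> ('a \<Rightarrow> 'b) \<Rightarrow> bool"
  where "nullhomotopic S T f \<longleftrightarrow> (\<exists>c. homotopic_with_canon (\<lambda>_. True) S T f (\<lambda>_. c))"

lemma nullhomotopic_cong:
  assumes "\<And>x. x \<in> S \<Longrightarrow> f x = g x"
  shows "nullhomotopic S T f \<longleftrightarrow> nullhomotopic S T g"
  unfolding nullhomotopic_def
proof (intro ex_cong1 iffI)
  fix c
  show "homotopic_with_canon (\<lambda>_. True) S T g (\<lambda>_. c)"
    if "homotopic_with_canon (\<lambda>_. True) S T f (\<lambda>_. c)"
    using that by (rule homotopic_with_eq) (auto simp: assms)
  show "homotopic_with_canon (\<lambda>_. True) S T f (\<lambda>_. c)"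
    if "homotopic_with_canon (\<lambda>_. True) S T g (\<lambda>_. c)"
    using that by (rule homotopic_with_eq) (auto simp: assms)
qed

lemma nullhomotopic_compose_left:
  assumes "nullhomotopic S T f" "continuous_on T g" "g \<in> T \<rightarrow> U"
  shows "nullhomotopic S U (g \<circ> f)"
proof -
  obtain c where "homotopic_with_canon (\<lambda>_. True) S T f (\<lambda>_. c)"
    using assms(1) nullhomotopic_def by blast
  then have "homotopic_with_canon (\<lambda>_. True) S U (g \<circ> f) (g \<circ> (\<lambda>_. c))"
    by (rule homotopic_with_compose_continuous_left) (use assms(2,3) in auto)
  then show ?thesis
    unfolding nullhomotopic_def o_def by blast
qed

lemma nullhomotopic_compose_right:
  assumes "nullhomotopic T U f" "continuous_on S h" "h \<in> S \<rightarrow> T"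
  shows "nullhomotopic S U (f \<circ> h)"
proof -
  obtain c where "homotopic_with_canon (\<lambda>_. True) T U f (\<lambda>_. c)"
    using assms(1) nullhomotopic_def by blast
  then have "homotopic_with_canon (\<lambda>_. True) S U (f \<circ> h) ((\<lambda>_. c) \<circ> h)"
    by (rule homotopic_with_compose_continuous_right) (use assms(2,3) in auto)
  then show ?thesis
    unfolding nullhomotopic_def o_def by blast
qed

lemma nullhomotopic_compose_homeomorphism:
  assumes hom: "homeomorphism S T p q"
  shows "nullhomotopic S U (f \<circ> p) \<longleftrightarrow> nullhomotopic T U f"
proof
  assume "nullhomotopic S U (f \<circ> p)"
  then have "nullhomotopic T U (f \<circ> p \<circ> q)"
    by (rule nullhomotopic_compose_right)
       (use homeomorphism_cont2[OF hom] homeomorphism_image2[OF hom] in auto)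
  then show "nullhomotopic T U f"
    by (rule nullhomotopic_cong[THEN iffD1, rotated]) (simp add: homeomorphism_apply2[OF hom])
next
  assume "nullhomotopic T U f"
  then show "nullhomotopic S U (f \<circ> p)"
    by (rule nullhomotopic_compose_right)
       (use homeomorphism_cont1[OF hom] homeomorphism_image1[OF hom] in auto)
qed

lemma not_nullhomotopic_circle_id: "\<not> nullhomotopic (sphere (0::complex) 1) (sphere 0 1) id"
  using contractible_sphere[of "0::complex" 1] unfolding nullhomotopic_def contractible_def by auto

lemma nullhomotopic_Pair_UNIV_iff:
  fixes e :: "'a::topological_space \<Rightarrow> 'c::real_normed_vector"
  assumes e: "continuous_on S e"
  shows "nullhomotopic S (T \<times> UNIV) (\<lambda>x. (f x, e x)) \<longleftrightarrow> nullhomotopic S T f"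
proof
  assume "nullhomotopic S (T \<times> UNIV) (\<lambda>x. (f x, e x))"
  then have "nullhomotopic S T (fst \<circ> (\<lambda>x. (f x, e x)))"
    by (rule nullhomotopic_compose_left) (auto intro: continuous_intros)
  then show "nullhomotopic S T f"
    by (simp add: o_def)
next
  assume "nullhomotopic S T f"
  then obtain c H where H: "continuous_on ({0..1::real} \<times> S) H" "H \<in> {0..1} \<times> S \<rightarrow> T"
      "\<forall>x. H (0, x) = f x" "\<forall>x. H (1, x) = c"
    unfolding nullhomotopic_def homotopic_with_def subtopology_Times[symmetric]
      prod_topology_euclidean continuous_map_subtopology_eu
    by (auto simp: image_subset_iff_funcset)
  have "continuous_on ({0..1} \<times> S) (\<lambda>z. (H z, (1 - fst z) *\<^sub>R e (snd z)))"
    by (intro continuous_intros H(1) continuous_on_compose2[OF e]) auto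
  then have "homotopic_with_canon (\<lambda>_. True) S (T \<times> UNIV) (\<lambda>x. (f x, e x)) (\<lambda>_. (c, 0))"
    unfolding homotopic_with_def subtopology_Times[symmetric]
      prod_topology_euclidean continuous_map_subtopology_eu
    using H(2-4) by (intro exI[of _ "\<lambda>z. (H z, (1 - fst z) *\<^sub>R e (snd z))"]) auto
  then show "nullhomotopic S (T \<times> UNIV) (\<lambda>x. (f x, e x))"
    unfolding nullhomotopic_def by blast
qed

lemma homeomorphic_circle_subset_eq:
  fixes S T :: "'a::topological_space set"
  assumes ST: "S \<subseteq> T" and S: "S homeomorphic sphere (0::complex) 1"
    and T: "T homeomorphic sphere (0::complex) 1"
  shows "S = T"
proof (rule ccontr)
  assume "S \<noteq> T"
  obtain q q' where q: "homeomorphism T (sphere (0::complex) 1) q q'"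
    using T homeomorphic_def by blast
  have qS': "homeomorphism S (q ` S) q q'"
    using homeomorphism_of_subsets[OF q ST] homeomorphism_image1[OF q] ST by blast
  then have qS: "q ` S homeomorphic sphere (0::complex) 1"
    using S homeomorphic_def homeomorphic_sym homeomorphic_trans by metis
  have "q ` S \<noteq> sphere 0 1"
    using homeomorphism_image2[OF qS'] homeomorphism_image2[OF q] \<open>S \<noteq> T\<close> by metis
  then have "q ` S \<subset> sphere 0 1"
    using homeomorphism_image1[OF q] ST by blast
  then have "connected (- q ` S)"
    by (rule Jordan_Brouwer_nonseparation[OF homeomorphic_refl]) simp
  then show False
    using Jordan_Brouwer_separation[OF qS] by simp
qed

lemma homeomorphic_circleD:
  fixes S :: "'a::topological_space set"
  assumes "S homeomorphic sphere (0::complex) 1"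
  shows "compact S" "connected S" "S \<noteq> {}"
proof -
  show "compact S"
    using homeomorphic_compactness[OF assms] by simp
  show "connected S"
    using homeomorphic_connectedness[OF assms] connected_sphere[of "0::complex" 1] by simp
  show "S \<noteq> {}"
    using assms by auto
qed

lemma components_Union_closed_disjoint:
  fixes \<C> :: "'a::topological_space set set"
  assumes fin: "finite \<C>" and disj: "disjoint \<C>"
    and \<C>: "\<And>C. C \<in> \<C> \<Longrightarrow> closed C \<and> connected C \<and> C \<noteq> {}"
  shows "components (\<Union>\<C>) = \<C>"
proof -
  have component: "C \<in> components (\<Union>\<C>)" if C: "C \<in> \<C>" for C
    unfolding in_components_maximal
  proof (intro conjI allI impI)
    show "C \<noteq> {}" "C \<subseteq> \<Union>\<C>" "connected C"
      using \<C> C by auto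
    fix D assume D: "D \<noteq> {} \<and> C \<subseteq> D \<and> D \<subseteq> \<Union>\<C> \<and> connected D"
    have "closed (\<Union>(\<C> - {C}))"
      using fin \<C> by (intro closed_Union) auto
    moreover have "C \<inter> \<Union>(\<C> - {C}) = {}"
      using disj C unfolding disjoint_def by blast
    ultimately have "C \<inter> D = {} \<or> \<Union>(\<C> - {C}) \<inter> D = {}"
      using D \<C>[OF C] by (intro connected_closedD) auto
    then show "D = C"
      using D \<C>[OF C] by blast
  qed
  show ?thesis
  proof
    show "components (\<Union>\<C>) \<subseteq> \<C>"
    proof
      fix K assume K: "K \<in> components (\<Union>\<C>)"
      then obtain C x where "C \<in> \<C>" "x \<in> C" "x \<in> K"
        using in_components_nonempty in_components_subset by blast
      then show "K \<in> \<C>"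
        using components_eq[OF K component] by blast
    qed
  qed (use component in blast)
qed

lemma homeomorphic_circle_imp_simple_loop:
  fixes J :: "'a::topological_space set"
  assumes "J homeomorphic sphere (0::complex) 1"
  obtains c where "simple_path c" "pathfinish c = pathstart c" "path_image c = J"
proof -
  obtain q q' where q: "homeomorphism (sphere (0::complex) 1) J q q'"
    using assms homeomorphic_def homeomorphic_sym by metis
  have "inj_on q (sphere 0 1)"
    using homeomorphism_apply1[OF q] by (metis inj_on_inverseI)
  moreover have "simple_path (circlepath (0::complex) 1)"
    by (simp add: simple_path_circlepath)
  ultimately have "simple_path (q \<circ> circlepath 0 1)"
    using simple_path_continuous_image homeomorphism_cont1[OF q] by fastforce
  moreover have "path_image (q \<circ> circlepath 0 1) = J"
    using homeomorphism_image1[OF q] by (simp add: path_image_compose)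
  ultimately show thesis
    using that by (simp add: pathfinish_compose pathstart_compose)
qed

lemma nullhomotopic_sgn_iff_notin_inside:
  fixes J :: "'a::euclidean_space set"
  assumes "compact J" "0 \<notin> J"
  shows "nullhomotopic J (sphere 0 1) sgn \<longleftrightarrow> 0 \<notin> inside J"
proof -
  have "sgn = (\<lambda>x::'a. inverse (norm (x - 0)) *\<^sub>R (x - 0))"
    by (simp add: fun_eq_iff sgn_div_norm divide_inverse_commute)
  then show ?thesis
    using Borsuk_map_essential_bounded_component[OF assms] assms(2)
    by (simp add: nullhomotopic_def inside_def)
qed

lemma not_simply_connected_if_circle_section:
  fixes T :: "('a::real_normed_vector \<times> complex) set"
  assumes "continuous_on (sphere 0 1) l" "l \<in> sphere 0 1 \<rightarrow> T" "snd ` T \<subseteq> sphere 0 1"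
    and "\<And>z. z \<in> sphere 0 1 \<Longrightarrow> snd (l z) = z"
  shows "\<not> simply_connected T"
proof
  assume "simply_connected T"
  then have "nullhomotopic (sphere 0 1) T l"
    using assms(1,2) unfolding simply_connected_eq_contractible_circlemap nullhomotopic_def
      image_subset_iff_funcset by blast
  then have "nullhomotopic (sphere 0 1) (sphere 0 1) (snd \<circ> l)"
    by (rule nullhomotopic_compose_left) (use assms(3) in \<open>auto intro: continuous_intros\<close>)
  then show False
    using not_nullhomotopic_circle_id nullhomotopic_cong[of "sphere 0 1" "snd \<circ> l" id] assms(4)
    by auto
qed

lemma closure_image_eq_image_closure:
  fixes f :: "'a::topological_space \<Rightarrow> 'b::t2_space"
  assumes "compact (closure S)" "continuous_on (closure S) f"
  shows "closure (f ` S) = f ` closure S"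
proof
  have "closed (f ` closure S)"
    using assms by (intro compact_imp_closed compact_continuous_image)
  then show "closure (f ` S) \<subseteq> f ` closure S"
    by (intro closure_minimal image_mono closure_subset)
  show "f ` closure S \<subseteq> closure (f ` S)"
    using assms(2) by (intro image_closure_subset closed_closure closure_subset)
qed

lemma cis_Arg2pi: "norm w = 1 \<Longrightarrow> cis (Arg2pi w) = w"
  by (simp add: cis_conv_exp complex_norm_eq_1_exp mult.commute)

lemma Arg2pi_cis: "0 \<le> t \<Longrightarrow> t < 2 * pi \<Longrightarrow> Arg2pi (cis t) = t"
  by (rule Arg2pi_unique[of 1]) (simp_all add: cis_conv_exp mult.commute)

lemma Arg2pi_pos_iff: "norm w = 1 \<Longrightarrow> 0 < Arg2pi w \<longleftrightarrow> w \<noteq> 1"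
  using Arg2pi[of w] Arg2pi_eq_0[of w] cis_Arg2pi[of w]
  by (smt (verit, ccfv_threshold) Arg2pi_cis cis_zero pi_gt_zero)

section \<open>The torus minus its diagonal\<close>

definition torus_diagonal :: "(complex \<times> complex) set"
  where "torus_diagonal = (\<lambda>z. (z, z)) ` sphere 0 1"

definition off_diagonal :: "(complex \<times> complex) set"
  where "off_diagonal = torus - torus_diagonal"

lemma off_diagonal_iff: "p \<in> off_diagonal \<longleftrightarrow> norm (fst p) = 1 \<and> norm (snd p) = 1 \<and> fst p \<noteq> snd p"
  by (cases p) (auto simp: off_diagonal_def torus_def torus_diagonal_def)

lemma torus_diagonal_subset_torus: "torus_diagonal \<subseteq> torus"
  by (auto simp: torus_diagonal_def torus_def)

lemma homeomorphism_torus_diagonal: "homeomorphism (sphere 0 1) torus_diagonal (\<lambda>z. (z, z)) snd"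
  unfolding torus_diagonal_def by (rule homeomorphismI) (auto intro!: continuous_intros)

lemma torus_diagonal_homeomorphic_circle: "torus_diagonal homeomorphic sphere (0::complex) 1"
  using homeomorphism_torus_diagonal homeomorphic_def homeomorphic_sym by blast

lemma openin_off_diagonal: "openin (top_of_set torus) off_diagonal"
proof -
  have "compact torus_diagonal"
    unfolding torus_diagonal_def by (intro compact_continuous_image continuous_intros compact_sphere)
  then show ?thesis
    unfolding off_diagonal_def
    by (intro openin_diff openin_subtopology_self closed_subset torus_diagonal_subset_torus
        compact_imp_closed)
qed

text \<open>In polar coordinates \<open>z = r v\<close> the puppy sits at \<open>v\<close> and the human is ahead of it by the
  angle \<open>4 arctan r \<in> (0, 2\<pi>)\<close>; both ends \<open>r \<rightarrow> 0\<close> and \<open>r \<rightarrow> \<infinity>\<close> approach the diagonal.\<close>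
definition torus_of_plane :: "complex \<Rightarrow> complex \<times> complex"
  where "torus_of_plane z = (sgn z * cis (4 * arctan (norm z)), sgn z)"

definition plane_of_torus :: "complex \<times> complex \<Rightarrow> complex"
  where "plane_of_torus p = snd p * of_real (tan (Arg2pi (fst p / snd p) / 4))"

lemma snd_torus_of_plane [simp]: "snd (torus_of_plane z) = sgn z"
  by (simp add: torus_of_plane_def)

lemma arctan_norm_bounds: "z \<noteq> 0 \<Longrightarrow> 0 < 4 * arctan (norm z) \<and> 4 * arctan (norm z) < 2 * pi"
  using arctan_ubound[of "norm z"] arctan_less_iff[of 0 "norm z"] by simp

lemma torus_of_plane_in_off_diagonal:
  assumes "z \<noteq> 0"
  shows "torus_of_plane z \<in> off_diagonal"
proof -
  have "cis (4 * arctan (norm z)) \<noteq> 1"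
    using Arg2pi_pos_iff[of "cis (4 * arctan (norm z))"] Arg2pi_cis arctan_norm_bounds[OF assms]
    by (simp add: less_imp_le)
  then show ?thesis
    using assms by (simp add: off_diagonal_iff torus_of_plane_def norm_mult norm_sgn sgn_zero_iff)
qed

lemma plane_of_torus_of_plane:
  assumes "z \<noteq> 0"
  shows "plane_of_torus (torus_of_plane z) = z"
proof -
  have "Arg2pi (cis (4 * arctan (norm z))) / 4 = arctan (norm z)"
    using Arg2pi_cis arctan_norm_bounds[OF assms] by (simp add: less_imp_le)
  then show ?thesis
    using assms by (simp add: plane_of_torus_def torus_of_plane_def tan_arctan sgn_eq)
qed

lemma off_diagonal_plane_of_torus:
  assumes p: "p \<in> off_diagonal"
  shows "plane_of_torus p \<noteq> 0" "torus_of_plane (plane_of_torus p) = p"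
proof -
  define w where "w = fst p / snd p"
  define \<theta> where "\<theta> = Arg2pi w"
  have v: "norm (snd p) = 1" and w: "norm w = 1" "w \<noteq> 1"
    using p by (auto simp: off_diagonal_iff w_def norm_divide)
  have \<theta>: "0 < \<theta>" "\<theta> < 2 * pi"
    using Arg2pi[of w] Arg2pi_pos_iff[OF w(1)] w(2) by (auto simp: \<theta>_def)
  have "arctan (tan (\<theta> / 4)) = \<theta> / 4"
    by (rule arctan_tan) (use \<theta> in auto)
  then have t: "0 < tan (\<theta> / 4)" "4 * arctan (tan (\<theta> / 4)) = \<theta>"
    using \<theta> by (auto intro!: tan_gt_zero)
  have pt: "plane_of_torus p = snd p * of_real (tan (\<theta> / 4))"
    by (simp add: plane_of_torus_def \<theta>_def w_def)
  show "plane_of_torus p \<noteq> 0"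
    using pt t v by auto
  have "snd p * cis \<theta> = fst p"
    using cis_Arg2pi[OF w(1)] v by (auto simp: \<theta>_def w_def)
  then show "torus_of_plane (plane_of_torus p) = p"
    using pt t v by (simp add: torus_of_plane_def sgn_mult norm_mult sgn_eq prod_eq_iff)
qed

lemma continuous_on_torus_of_plane: "continuous_on (- {0}) torus_of_plane"
  unfolding torus_of_plane_def by (intro continuous_intros) auto

lemma continuous_on_plane_of_torus: "continuous_on off_diagonal plane_of_torus"
proof (rule continuous_at_imp_continuous_on, intro ballI)
  fix p assume p: "p \<in> off_diagonal"
  define w where "w = fst p / snd p"
  have v: "snd p \<noteq> 0" and w: "norm w = 1" "w \<noteq> 1"
    using p by (auto simp: off_diagonal_iff w_def norm_divide)
  have \<theta>: "0 < Arg2pi w" "Arg2pi w < 2 * pi"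
    using Arg2pi[of w] Arg2pi_pos_iff[OF w(1)] w(2) by auto
  then have "w \<notin> \<real>\<^sub>\<ge>\<^sub>0"
    using Arg2pi_eq_0[of w] by (auto simp: nonneg_Reals_def)
  then have "isCont Arg2pi (fst p / snd p)"
    unfolding w_def by (rule continuous_at_Arg2pi)
  moreover have "isCont (\<lambda>p. fst p / snd p) p"
    using v by (intro continuous_intros) auto
  ultimately have "isCont (\<lambda>p. Arg2pi (fst p / snd p)) p"
    using continuous_at_compose[of p "\<lambda>p. fst p / snd p" Arg2pi] by (simp add: o_def)
  moreover have "cos (Arg2pi w / 4) \<noteq> 0"
    using cos_gt_zero_pi[of "Arg2pi w / 4"] \<theta> by auto
  ultimately have "isCont (\<lambda>p. tan (Arg2pi (fst p / snd p) / 4)) p"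
    unfolding w_def by (intro continuous_intros isCont_o2[where g = tan, OF _ isCont_tan]) auto
  then show "isCont plane_of_torus p"
    unfolding plane_of_torus_def by (intro continuous_intros)
qed

lemma homeomorphism_off_diagonal: "homeomorphism (- {0}) off_diagonal torus_of_plane plane_of_torus"
proof (rule homeomorphismI)
  show "torus_of_plane ` (- {0}) \<subseteq> off_diagonal"
    by (rule image_subsetI) (simp add: torus_of_plane_in_off_diagonal)
  show "plane_of_torus ` off_diagonal \<subseteq> - {0}"
    by (rule image_subsetI) (simp add: off_diagonal_plane_of_torus(1))
  show "\<And>z. z \<in> - {0} \<Longrightarrow> plane_of_torus (torus_of_plane z) = z"
    using plane_of_torus_of_plane by blast
  show "\<And>p. p \<in> off_diagonal \<Longrightarrow> torus_of_plane (plane_of_torus p) = p"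
    using off_diagonal_plane_of_torus(2) by blast
qed (rule continuous_on_torus_of_plane continuous_on_plane_of_torus)+

lemma torus_of_plane_ray:
  assumes "norm v = 1" "0 < t"
  shows "torus_of_plane (of_real t * v) = (v * cis (4 * arctan t), v)"
  using assms by (simp add: torus_of_plane_def norm_mult sgn_eq)

lemma diagonal_in_closure_torus_of_plane:
  assumes v: "norm v = 1" and F: "F \<noteq> bot" and lim: "((\<lambda>t. cis (4 * arctan t)) \<longlongrightarrow> 1) F"
    and ev: "\<forall>\<^sub>F t in F. 0 < t \<and> of_real t * v \<in> A"
  shows "(v, v) \<in> closure (torus_of_plane ` A)"
proof (rule Lim_in_closed_set[OF closed_closure _ F])
  show "((\<lambda>t. torus_of_plane (of_real t * v)) \<longlongrightarrow> (v, v)) F"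
  proof (rule Lim_transform_eventually)
    show "((\<lambda>t. (v * cis (4 * arctan t), v)) \<longlongrightarrow> (v, v)) F"
      using tendsto_mult[OF tendsto_const lim, of v] by (intro tendsto_Pair) auto
    show "\<forall>\<^sub>F t in F. (v * cis (4 * arctan t), v) = torus_of_plane (of_real t * v)"
      using ev by eventually_elim (simp add: torus_of_plane_ray v)
  qed
  show "\<forall>\<^sub>F t in F. torus_of_plane (of_real t * v) \<in> closure (torus_of_plane ` A)"
    using ev by eventually_elim (auto intro: closure_subset[THEN subsetD])
qed

lemma torus_diagonal_subset_closure:
  assumes r: "0 < r"
  shows "torus_diagonal \<subseteq> closure (torus_of_plane ` (ball 0 r - {0}))"
    and "torus_diagonal \<subseteq> closure (torus_of_plane ` (- ball 0 r))"
proof -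
  have "((\<lambda>t. cis (4 * arctan t)) \<longlongrightarrow> cis (4 * arctan 0)) (at_right 0)"
    by (intro tendsto_intros)
  then have lim0: "((\<lambda>t. cis (4 * arctan t)) \<longlongrightarrow> 1) (at_right 0)"
    by simp
  have "((\<lambda>t. cis (4 * arctan t)) \<longlongrightarrow> cis (4 * (pi / 2))) at_top"
    by (intro tendsto_intros tendsto_arctan_at_top)
  then have lim_top: "((\<lambda>t. cis (4 * arctan t)) \<longlongrightarrow> 1) at_top"
    by simp
  have ev0: "\<forall>\<^sub>F t in at_right 0. 0 < t \<and> t < r"
    using eventually_at_right_field r by blast
  have ev_top: "\<forall>\<^sub>F t in at_top. r < t"
    by simp
  show "torus_diagonal \<subseteq> closure (torus_of_plane ` (ball 0 r - {0}))"
    unfolding torus_diagonal_def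
  proof (rule image_subsetI)
    fix v :: complex assume "v \<in> sphere 0 1"
    then show "(v, v) \<in> closure (torus_of_plane ` (ball 0 r - {0}))"
      by (intro diagonal_in_closure_torus_of_plane[OF _ trivial_limit_at_right_real lim0]
          eventually_mono[OF ev0]) (auto simp: norm_mult)
  qed
  show "torus_diagonal \<subseteq> closure (torus_of_plane ` (- ball 0 r))"
    unfolding torus_diagonal_def
  proof (rule image_subsetI)
    fix v :: complex assume "v \<in> sphere 0 1"
    then show "(v, v) \<in> closure (torus_of_plane ` (- ball 0 r))"
      using r by (intro diagonal_in_closure_torus_of_plane[OF _ trivial_limit_at_top_linorder lim_top]
          eventually_mono[OF ev_top]) (auto simp: norm_mult)
  qed
qed

section \<open>Contractible cycles on the torus\<close>

lemma inj_on_torus_of_plane: "inj_on torus_of_plane (- {0})"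
  using homeomorphism_apply1[OF homeomorphism_off_diagonal] by (metis inj_on_inverseI)

lemma torus_minus_torus_of_plane_image:
  assumes "0 \<notin> J"
  shows "torus - torus_of_plane ` J = torus_diagonal \<union> torus_of_plane ` (- {0} - J)"
proof -
  have "torus_of_plane ` (- {0} - J) = off_diagonal - torus_of_plane ` J"
    using inj_on_image_set_diff[OF inj_on_torus_of_plane, of "- {0}" J] assms
      homeomorphism_image1[OF homeomorphism_off_diagonal] by auto
  moreover have "torus_of_plane ` J \<subseteq> off_diagonal"
    using assms by (intro image_subsetI torus_of_plane_in_off_diagonal) auto
  ultimately show ?thesis
    using torus_diagonal_subset_torus by (auto simp: off_diagonal_def)
qed

lemma connected_torus_diagonal_Un_image:
  assumes "connected A" "A \<subseteq> - {0}" "B \<subseteq> A" "torus_diagonal \<subseteq> closure (torus_of_plane ` B)"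
  shows "connected (torus_diagonal \<union> torus_of_plane ` A)"
proof -
  have conn: "connected (torus_of_plane ` A)"
    using assms(1,2) continuous_on_subset[OF continuous_on_torus_of_plane]
    by (intro connected_continuous_image) auto
  have "closure (torus_of_plane ` B) \<subseteq> closure (torus_of_plane ` A)"
    using assms(3) by (intro closure_mono image_mono)
  then have "torus_diagonal \<subseteq> closure (torus_of_plane ` A)"
    using assms(4) by blast
  then show ?thesis
    using connected_intermediate_closure[OF conn Un_upper2 Un_least[OF _ closure_subset]] by blast
qed

text \<open>Near the origin the inside, near infinity the outside of the curve accumulates on the
  whole diagonal, so the diagonal glues the two complementary regions together.\<close>
lemma connected_torus_minus_image_if_inside:
  assumes J: "J homeomorphic sphere (0::complex) 1" and ins: "0 \<in> inside J"
  shows "connected (torus - torus_of_plane ` J)"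
proof -
  obtain c where c: "simple_path c" "pathfinish c = pathstart c" "path_image c = J"
    using homeomorphic_circle_imp_simple_loop[OF J] by blast
  have "bounded J"
    using homeomorphic_circleD(1)[OF J] compact_imp_bounded by blast
  have J0: "0 \<notin> J"
    using ins inside_no_overlap by blast
  have I: "open (inside J)" "connected (inside J)"
    using Jordan_inside_outside[OF c(1,2)] c(3) by auto
  obtain e where e: "0 < e" "ball 0 e \<subseteq> inside J"
    using I(1) ins open_contains_ball by blast
  obtain B where B: "0 < B" "- outside J \<subseteq> ball 0 B"
    using bounded_subset_ballD[OF cobounded_outside[OF \<open>bounded J\<close>]] by blast
  have outside0: "outside J \<subseteq> - {0}"
    using ins inside_Int_outside by blast
  have "connected (inside J - {0})"
    using I by (intro connected_open_delete) auto
  then have conn1: "connected (torus_diagonal \<union> torus_of_plane ` (inside J - {0}))"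
    using torus_diagonal_subset_closure(1)[OF e(1)] e(2)
    by (intro connected_torus_diagonal_Un_image[where B = "ball 0 e - {0}"]) auto
  have conn2: "connected (torus_diagonal \<union> torus_of_plane ` outside J)"
    using torus_diagonal_subset_closure(2)[OF B(1)] B(2) outside0 connected_outside[OF \<open>bounded J\<close>]
    by (intro connected_torus_diagonal_Un_image[where B = "- ball 0 B"]) auto
  have "- {0} - J = (inside J - {0}) \<union> outside J"
    using inside_Un_outside[of J] outside0 by blast
  then have "torus - torus_of_plane ` J =
      (torus_diagonal \<union> torus_of_plane ` (inside J - {0})) \<union> (torus_diagonal \<union> torus_of_plane ` outside J)"
    unfolding torus_minus_torus_of_plane_image[OF J0] by auto
  moreover have "torus_diagonal \<noteq> {}"
    using homeomorphic_circleD(3)[OF torus_diagonal_homeomorphic_circle] .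
  ultimately show ?thesis
    using connected_Un[OF conn1 conn2] by auto
qed
lemma contractible_in_torus_image_if_not_inside:
  assumes J: "J homeomorphic sphere (0::complex) 1" and J0: "0 \<notin> J" and ins: "0 \<notin> inside J"
  shows "contractible_in_torus (torus_of_plane ` J)"
  unfolding contractible_in_torus_def
proof (intro exI conjI)
  obtain c where c: "simple_path c" "pathfinish c = pathstart c" "path_image c = J"
    using homeomorphic_circle_imp_simple_loop[OF J] by blast
  note Jordan = Jordan_inside_outside[OF c(1,2), unfolded c(3)]
  have I0: "inside J \<subseteq> - {0}"
    using ins by blast
  have clI: "closure (inside J) = inside J \<union> J"
    using Jordan by (simp add: closure_Un_frontier)
  have "openin (top_of_set off_diagonal) (torus_of_plane ` inside J)"
    using Jordan I0 by (intro homeomorphism_imp_open_map[OF homeomorphism_off_diagonal] open_subset) auto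
  then show "openin (top_of_set torus) (torus_of_plane ` inside J)"
    using openin_off_diagonal by (rule openin_trans)
  have "- inside J = closure (outside J)"
    using Jordan union_with_outside[of J] by (simp add: closure_Un_frontier Un_commute)
  then have "simply_connected (inside J)"
    using Jordan simply_connected_iff_simple connected_imp_connected_closure by metis
  moreover have "inside J homeomorphic torus_of_plane ` inside J"
    using homeomorphism_of_subsets[OF homeomorphism_off_diagonal I0 order.refl refl]
    unfolding homeomorphic_def by blast
  ultimately show "simply_connected (torus_of_plane ` inside J)"
    using homeomorphic_simply_connected_eq by blast
  have "compact (closure (inside J))"
    using Jordan compact_closure by blast
  moreover have "continuous_on (closure (inside J)) torus_of_plane"
    using clI J0 I0 by (intro continuous_on_subset[OF continuous_on_torus_of_plane]) auto
  ultimately have "closure (torus_of_plane ` inside J) = torus_of_plane ` inside J \<union> torus_of_plane ` J"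
    using clI closure_image_eq_image_closure by (metis image_Un)
  moreover have "torus_of_plane ` inside J \<inter> torus_of_plane ` J = {}"
    using inj_on_torus_of_plane I0 J0 inside_no_overlap[of J] unfolding inj_on_def by blast
  ultimately show "closure (torus_of_plane ` inside J) - torus_of_plane ` inside J = torus_of_plane ` J"
    by blast
qed

text \<open>Any region \<open>U\<close> with \<open>closure U - U = C\<close> is clopen in \<open>torus - C\<close>, hence all of it.\<close>
lemma not_contractible_in_torus:
  assumes "C \<noteq> {}" "connected (torus - C)" "\<not> simply_connected (torus - C)"
  shows "\<not> contractible_in_torus C"
proof
  assume "contractible_in_torus C"
  then obtain U where U: "openin (top_of_set torus) U" "simply_connected U" "closure U - U = C"
    unfolding contractible_in_torus_def by blast
  have UT: "U \<subseteq> torus - C"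
    using openin_imp_subset[OF U(1)] U(3) by blast
  then have "openin (top_of_set (torus - C)) U"
    using openin_subset_trans[OF U(1) UT] by blast
  moreover have "closedin (top_of_set (torus - C)) U"
    unfolding closedin_closed using UT U(3) closure_subset by (intro exI[of _ "closure U"]) auto
  moreover have "U \<noteq> {}"
    using U(3) assms(1) by auto
  ultimately have "U = torus - C"
    using assms(2) connected_clopen by blast
  then show False
    using U(2) assms(3) by simp
qed

lemma not_simply_connected_torus_minus:
  assumes "C \<inter> torus_diagonal = {}"
  shows "\<not> simply_connected (torus - C)"
proof (rule not_simply_connected_if_circle_section)
  show "(\<lambda>z. (z, z)) \<in> sphere 0 1 \<rightarrow> torus - C"
    using assms torus_diagonal_subset_torus by (auto simp: torus_diagonal_def)
  show "snd ` (torus - C) \<subseteq> sphere 0 1"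
    by (auto simp: torus_def)
qed (auto intro: continuous_intros)

lemma not_contractible_in_torus_diagonal: "\<not> contractible_in_torus torus_diagonal"
proof (rule not_contractible_in_torus)
  have "torus - torus_diagonal homeomorphic - {0::complex}"
    using homeomorphism_off_diagonal homeomorphic_def homeomorphic_sym off_diagonal_def by metis
  then show "connected (torus - torus_diagonal)" "\<not> simply_connected (torus - torus_diagonal)"
    using homeomorphic_connectedness homeomorphic_simply_connected_eq
      connected_punctured_universe[of "0::complex"] simply_connected_punctured_universe_eq[of "0::complex"]
    by auto
qed (auto simp: torus_diagonal_def)

lemma not_nullhomotopic_snd_torus_diagonal: "\<not> nullhomotopic torus_diagonal (sphere 0 1) snd"
  using nullhomotopic_compose_homeomorphism[OF homeomorphism_torus_diagonal, of "sphere 0 1" snd]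
    not_nullhomotopic_circle_id by (simp add: o_def id_def)

lemma contractible_in_torus_image_iff_nullhomotopic:
  assumes J: "J homeomorphic sphere (0::complex) 1" and J0: "0 \<notin> J"
  shows "contractible_in_torus (torus_of_plane ` J) \<longleftrightarrow> nullhomotopic (torus_of_plane ` J) (sphere 0 1) snd"
proof -
  have "homeomorphism J (torus_of_plane ` J) torus_of_plane plane_of_torus"
    using J0 by (intro homeomorphism_of_subsets[OF homeomorphism_off_diagonal _ order.refl refl]) auto
  then have "nullhomotopic (torus_of_plane ` J) (sphere 0 1) snd \<longleftrightarrow> nullhomotopic J (sphere 0 1) sgn"
    using nullhomotopic_compose_homeomorphism[of J _ torus_of_plane plane_of_torus "sphere 0 1" snd]
    by (simp add: o_def)
  also have "\<dots> \<longleftrightarrow> 0 \<notin> inside J"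
    using J0 homeomorphic_circleD(1)[OF J] by (intro nullhomotopic_sgn_iff_notin_inside)
  finally have null_iff: "nullhomotopic (torus_of_plane ` J) (sphere 0 1) snd \<longleftrightarrow> 0 \<notin> inside J" .
  show ?thesis
  proof (cases "0 \<in> inside J")
    case True
    have "torus_of_plane ` J \<subseteq> off_diagonal"
      using J0 by (intro image_subsetI torus_of_plane_in_off_diagonal) auto
    then have "torus_of_plane ` J \<inter> torus_diagonal = {}"
      unfolding off_diagonal_def by blast
    moreover have "J \<noteq> {}"
      using homeomorphic_circleD(3)[OF J] .
    ultimately have "\<not> contractible_in_torus (torus_of_plane ` J)"
      using True J by (intro not_contractible_in_torus connected_torus_minus_image_if_inside
          not_simply_connected_torus_minus) auto
    then show ?thesis
      using null_iff True by blast
  next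
    case False
    then show ?thesis
      using null_iff contractible_in_torus_image_if_not_inside[OF J J0] by blast
  qed
qed

lemma contractible_in_torus_iff_nullhomotopic:
  assumes C: "C homeomorphic sphere (0::complex) 1" "C \<subseteq> torus"
    and diag: "C = torus_diagonal \<or> C \<inter> torus_diagonal = {}"
  shows "contractible_in_torus C \<longleftrightarrow> nullhomotopic C (sphere 0 1) snd"
  using diag
proof
  assume "C = torus_diagonal"
  then show ?thesis
    using not_contractible_in_torus_diagonal not_nullhomotopic_snd_torus_diagonal by simp
next
  assume "C \<inter> torus_diagonal = {}"
  then have "C \<subseteq> off_diagonal"
    using C(2) by (auto simp: off_diagonal_def)
  then have hom: "homeomorphism C (plane_of_torus ` C) plane_of_torus torus_of_plane"
    by (intro homeomorphism_of_subsets[OF homeomorphism_symD[OF homeomorphism_off_diagonal] _ order.refl refl])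
  then have "plane_of_torus ` C homeomorphic sphere (0::complex) 1"
    using C(1) homeomorphic_def homeomorphic_sym homeomorphic_trans by metis
  moreover have "0 \<notin> plane_of_torus ` C"
    using \<open>C \<subseteq> off_diagonal\<close> off_diagonal_plane_of_torus(1) by auto
  moreover have "torus_of_plane ` plane_of_torus ` C = C"
    using homeomorphism_image2[OF hom] .
  ultimately show ?thesis
    using contractible_in_torus_image_iff_nullhomotopic by metis
qed

section \<open>The dual attraction diagram\<close>

lemma simple_closed_C3_arclengthD:
  assumes "simple_closed_C3_arclength L \<gamma>"
  shows "L > 0" "\<And>t. \<gamma> (t + L) = \<gamma> t" "\<And>t. (\<gamma> has_vector_derivative dgam \<gamma> 1 t) (at t)"
    "continuous_on UNIV (dgam \<gamma> 1)" "\<And>t. norm (dgam \<gamma> 1 t) = 1"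
proof -
  note scc = assms[unfolded simple_closed_C3_arclength_def]
  show "L > 0" "\<And>t. \<gamma> (t + L) = \<gamma> t" "\<And>t. norm (dgam \<gamma> 1 t) = 1"
    using scc by auto
  show "\<And>t. (\<gamma> has_vector_derivative dgam \<gamma> 1 t) (at t)"
    using scc[THEN conjunct2, THEN conjunct2, THEN conjunct2, THEN conjunct1, rule_format, of 0]
    by (simp add: dgam_def)
  have "(dgam \<gamma> 1 has_vector_derivative dgam \<gamma> 2 t) (at t)" for t
    using scc[THEN conjunct2, THEN conjunct2, THEN conjunct2, THEN conjunct1, rule_format, of 1]
    by (simp add: numeral_2_eq_2)
  then show "continuous_on UNIV (dgam \<gamma> 1)"
    by (intro continuous_at_imp_continuous_on ballI has_vector_derivative_continuous)
qed

lemma has_vector_derivative_periodic: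
  assumes f': "\<And>t. (f has_vector_derivative f' t) (at t)" and f: "\<And>t. f (t + L) = f t"
  shows "f' (t + L) = f' t"
proof -
  have "((\<lambda>s. s + L) has_vector_derivative 1) (at t)"
    by (auto intro!: derivative_eq_intros simp flip: has_real_derivative_iff_has_vector_derivative)
  then have "((\<lambda>s. f (s + L)) has_vector_derivative f' (t + L)) (at t)"
    using vector_diff_chain_at[OF _ f', of "\<lambda>s. s + L" 1 t] by (simp add: o_def)
  then show ?thesis
    using f f'[of t] vector_derivative_unique_at by simp
qed

lemma infdist_line:
  fixes p a d :: complex
  assumes "norm d = 1"
  shows "infdist p {a + of_real s * d | s. True} = \<bar>Im (cnj d * (p - a))\<bar>"
proof -
  define w where "w = cnj d * (p - a)"
  have "cnj d * d = 1"
    using assms by (metis complex_norm_square mult.commute of_real_1 power_one)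
  then have "p - (a + of_real s * d) = d * (w - of_real s)" for s
    unfolding w_def by (simp add: algebra_simps)
  then have dist_eq: "dist p (a + of_real s * d) = norm (w - of_real s)" for s
    using assms by (simp add: dist_norm norm_mult)
  let ?S = "{a + of_real s * d | s. True}"
  have ne: "?S \<noteq> {}"
    by blast
  have "infdist p ?S \<le> \<bar>Im w\<bar>"
  proof (rule infdist_le2)
    show "a + of_real (Re w) * d \<in> ?S"
      by blast
    have "w - of_real (Re w) = \<i> * of_real (Im w)"
      by (simp add: complex_eq_iff)
    then show "dist p (a + of_real (Re w) * d) \<le> \<bar>Im w\<bar>"
      using dist_eq by (simp add: norm_mult)
  qed
  moreover have "\<bar>Im w\<bar> \<le> infdist p ?S"
    unfolding infdist_notempty[OF ne]
  proof (rule cINF_greatest[OF ne])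
    fix x assume "x \<in> ?S"
    then obtain s where "x = a + of_real s * d"
      by blast
    then show "\<bar>Im w\<bar> \<le> dist p x"
      using dist_eq abs_Im_le_cmod[of "w - of_real s"] by simp
  qed
  ultimately show ?thesis
    unfolding w_def by simp
qed

lemma ell_eq:
  assumes "simple_closed_C3_arclength L \<gamma>"
  shows "ell \<gamma> x y = Im (cnj (dgam \<gamma> 1 y) * (\<gamma> x - \<gamma> y))"
  unfolding ell_def infdist_line[OF simple_closed_C3_arclengthD(5)[OF assms]] by simp

lemma ell_periodic:
  assumes "simple_closed_C3_arclength L \<gamma>"
  shows "ell \<gamma> (x + of_int k * L) (y + of_int m * L) = ell \<gamma> x y"
proof -
  note D = simple_closed_C3_arclengthD[OF assms]
  interpret \<gamma>: periodic_fun_simple \<gamma> L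
    by unfold_locales (rule D(2))
  interpret d\<gamma>: periodic_fun_simple "dgam \<gamma> 1" L
    by unfold_locales (rule has_vector_derivative_periodic[OF D(3,2)])
  show ?thesis
    unfolding ell_eq[OF assms] \<gamma>.plus_of_int d\<gamma>.plus_of_int ..
qed

lemma circ_image:
  assumes "L > 0"
  shows "circ L ` {0..L} = sphere 0 1"
proof
  show "circ L ` {0..L} \<subseteq> sphere 0 1"
    by (auto simp: circ_def)
  show "sphere 0 1 \<subseteq> circ L ` {0..L}"
  proof
    fix u :: complex assume "u \<in> sphere 0 1"
    then have "circ L (L * Arg2pi u / (2 * pi)) = u"
      using assms cis_Arg2pi by (simp add: circ_def)
    moreover have "L * Arg2pi u / (2 * pi) \<in> {0..L}"
      using assms Arg2pi[of u] by (auto simp: field_simps)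
    ultimately show "u \<in> circ L ` {0..L}"
      by (metis image_eqI)
  qed
qed

lemma circ_eqE:
  assumes "L > 0" "circ L x = circ L y"
  obtains k :: int where "y = x + of_int k * L"
proof -
  have "cis (2 * pi * y / L - 2 * pi * x / L) = 1"
    using assms(2) unfolding circ_def by (simp flip: cis_divide)
  then obtain k :: int where "2 * pi * y / L - 2 * pi * x / L = of_int k * (2 * pi)"
    using cis_eq_1_iff by blast
  then have "2 * pi * (y - x) = 2 * pi * (of_int k * L)"
    using assms(1) by (simp add: field_simps)
  then have "y = x + of_int k * L"
    using pi_gt_zero by simp
  then show thesis
    by (rule that)
qed

lemma Ltor_Etor:
  assumes "simple_closed_C3_arclength L \<gamma>"
  shows "Ltor L \<gamma> (Etor L (x, y)) = (circ L y, ell \<gamma> x y)"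
proof -
  have L: "L > 0"
    using simple_closed_C3_arclengthD(1)[OF assms] .
  define x' where "x' = (SOME x'. circ L x' = circ L x)"
  define y' where "y' = (SOME y'. circ L y' = circ L y)"
  have "circ L x' = circ L x" "circ L y' = circ L y"
    unfolding x'_def y'_def by (rule someI, rule refl)+
  then obtain k m :: int where "x = x' + of_int k * L" "y = y' + of_int m * L"
    using circ_eqE[OF L] by metis
  then have "ell \<gamma> x' y' = ell \<gamma> x y"
    using ell_periodic[OF assms] by simp
  then show ?thesis
    by (simp add: Ltor_def Etor_def flip: x'_def y'_def)
qed

lemma continuous_on_torus_lift:
  assumes L: "L > 0" and F: "continuous_on UNIV F" and G: "\<And>p. G (Etor L p) = F p"
  shows "continuous_on torus G"
proof -
  define D where "D = {0..L} \<times> {0..L}"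
  have Etor: "Etor L = map_prod (circ L) (circ L)"
    by (simp add: fun_eq_iff Etor_def)
  have image: "Etor L ` D = torus"
    unfolding D_def Etor torus_def by (intro map_prod_surj_on circ_image L)
  have "quotient_map (top_of_set D) (top_of_set torus) (Etor L)"
  proof (rule continuous_imp_quotient_map)
    have "continuous_on D (Etor L)"
      unfolding Etor_def circ_def using L by (intro continuous_intros) auto
    then show "continuous_map (top_of_set D) (top_of_set torus) (Etor L)"
      using image by (simp add: continuous_map_subtopology_eu image_subset_iff_funcset[symmetric])
    show "compact_space (top_of_set D)"
      unfolding D_def by (rule compact_space_subtopology) (simp add: compact_Times)
    show "Hausdorff_space (top_of_set torus)"
      by (rule Hausdorff_space_subtopology) simp
  qed (use image in simp)
  moreover have "continuous_map (top_of_set D) euclidean (G \<circ> Etor L)"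
    using continuous_on_subset[OF F] by (simp add: o_def G)
  ultimately have "continuous_map (top_of_set torus) euclidean G"
    by (rule continuous_compose_quotient_map)
  then show ?thesis
    by simp
qed

lemma continuous_on_snd_Ltor:
  assumes "simple_closed_C3_arclength L \<gamma>"
  shows "continuous_on torus (\<lambda>z. snd (Ltor L \<gamma> z))"
proof (rule continuous_on_torus_lift)
  note D = simple_closed_C3_arclengthD[OF assms]
  show "L > 0"
    using D(1) .
  have "continuous_on UNIV \<gamma>"
    using D(3) by (intro continuous_at_imp_continuous_on ballI has_vector_derivative_continuous)
  then have "continuous_on UNIV (\<lambda>p::real \<times> real. \<gamma> (fst p))"
    "continuous_on UNIV (\<lambda>p::real \<times> real. \<gamma> (snd p))"
    "continuous_on UNIV (\<lambda>p::real \<times> real. dgam \<gamma> 1 (snd p))"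
    using D(4) by (auto intro: continuous_on_compose2[OF _ continuous_on_fst]
        continuous_on_compose2[OF _ continuous_on_snd])
  then show "continuous_on UNIV (\<lambda>p. ell \<gamma> (fst p) (snd p))"
    unfolding ell_eq[OF assms] by (intro continuous_intros)
  show "\<And>p. snd (Ltor L \<gamma> (Etor L p)) = ell \<gamma> (fst p) (snd p)"
    using Ltor_Etor[OF assms] by (metis prod.collapse snd_conv)
qed

lemma dual_essential_iff_not_nullhomotopic:
  assumes scc: "simple_closed_C3_arclength L \<gamma>"
    and C: "C homeomorphic sphere (0::complex) 1" "C \<subseteq> torus"
  shows "dual_essential L \<gamma> C \<longleftrightarrow> \<not> nullhomotopic C (sphere 0 1) snd"
proof -
  have "nullhomotopic (sphere 0 1) cylinder (Ltor L \<gamma> \<circ> p) \<longleftrightarrow> nullhomotopic C (sphere 0 1) snd"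
    if p: "homeomorphism (sphere 0 1) C p q" for p q
  proof -
    have Ltor: "Ltor L \<gamma> \<circ> p = (\<lambda>x. ((snd \<circ> p) x, ((\<lambda>z. snd (Ltor L \<gamma> z)) \<circ> p) x))"
      by (simp add: fun_eq_iff Ltor_def)
    have "continuous_on (sphere 0 1) ((\<lambda>z. snd (Ltor L \<gamma> z)) \<circ> p)"
      using homeomorphism_cont1[OF p] homeomorphism_image1[OF p] C(2)
      by (intro continuous_on_compose continuous_on_subset[OF continuous_on_snd_Ltor[OF scc]]) auto
    then have "nullhomotopic (sphere 0 1) (sphere 0 1 \<times> UNIV)
        (\<lambda>x. ((snd \<circ> p) x, ((\<lambda>z. snd (Ltor L \<gamma> z)) \<circ> p) x)) \<longleftrightarrow>
      nullhomotopic (sphere 0 1) (sphere 0 1) (snd \<circ> p)"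
      by (rule nullhomotopic_Pair_UNIV_iff)
    then show ?thesis
      unfolding cylinder_def Ltor nullhomotopic_compose_homeomorphism[OF p] .
  qed
  moreover obtain p q where "homeomorphism (sphere (0::complex) 1) C p q"
    using C(1) homeomorphic_def homeomorphic_sym by metis
  ultimately show ?thesis
    unfolding dual_essential_def nullhomotopic_def[symmetric] by blast
qed

section \<open>Critical cycles\<close>

lemma torus_diagonal_subset_crit_set:
  assumes "L > 0"
  shows "torus_diagonal \<subseteq> crit_set L \<gamma>"
proof
  fix p assume "p \<in> torus_diagonal"
  then obtain x where "p = (circ L x, circ L x)"
    using circ_image[OF assms] by (auto simp: torus_diagonal_def)
  moreover have "critical L \<gamma> x x"
    unfolding critical_def same_point_def by (intro disjI1 exI[of _ 0]) simp
  ultimately show "p \<in> crit_set L \<gamma>"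
    unfolding crit_set_def Etor_def by force
qed

lemma crit_cycle_cases:
  assumes L: "L > 0" and gen: "generic L \<gamma>" and C: "C \<in> crit_cycles L \<gamma>"
  shows "C homeomorphic sphere (0::complex) 1" "C \<subseteq> torus"
    "C = torus_diagonal \<or> C \<inter> torus_diagonal = {}"
proof -
  obtain \<C> where \<C>: "finite \<C>" "disjoint \<C>" "\<forall>C\<in>\<C>. C homeomorphic sphere (0::complex) 1"
      "\<Union>\<C> = crit_set L \<gamma>"
    using gen unfolding generic_def by blast
  have "K \<in> \<C> \<Longrightarrow> closed K \<and> connected K \<and> K \<noteq> {}" for K
    using \<C>(3) homeomorphic_circleD compact_imp_closed by blast
  then have cycles: "crit_cycles L \<gamma> = \<C>"
    unfolding crit_cycles_def using components_Union_closed_disjoint[OF \<C>(1,2)] \<C>(4) by simp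
  then show circle: "C homeomorphic sphere (0::complex) 1"
    using \<C>(3) C by blast
  show "C \<subseteq> torus"
    using C in_components_subset unfolding crit_cycles_def crit_set_def
    by (fastforce simp: Etor_def torus_def circ_def)
  have "connected torus_diagonal"
    using homeomorphic_circleD(2)[OF torus_diagonal_homeomorphic_circle] .
  moreover have "crit_set L \<gamma> \<noteq> {}"
    using torus_diagonal_subset_crit_set[OF L] homeomorphic_circleD(3)[OF torus_diagonal_homeomorphic_circle]
    by blast
  ultimately obtain K where K: "K \<in> crit_cycles L \<gamma>" "torus_diagonal \<subseteq> K"
    using exists_component_superset[OF torus_diagonal_subset_crit_set[OF L]]
    unfolding crit_cycles_def by blast
  then have "torus_diagonal = K"
    using homeomorphic_circle_subset_eq torus_diagonal_homeomorphic_circle cycles \<C>(3) by blast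
  then show "C = torus_diagonal \<or> C \<inter> torus_diagonal = {}"
    using components_nonoverlap C K(1) unfolding crit_cycles_def by blast
qed

theorem lemma4:
  fixes L :: real and \<gamma> :: "real \<Rightarrow> complex"
  assumes "simple_closed_C3_arclength L \<gamma>"
    and "generic L \<gamma>"
  shows "card {C \<in> crit_cycles L \<gamma>. \<not> contractible_in_torus C}
       = card {C \<in> crit_cycles L \<gamma>. dual_essential L \<gamma> C}"
proof -
  have L: "L > 0"
    using simple_closed_C3_arclengthD(1)[OF assms(1)] .
  have "\<not> contractible_in_torus C \<longleftrightarrow> dual_essential L \<gamma> C" if "C \<in> crit_cycles L \<gamma>" for C
    using crit_cycle_cases[OF L assms(2) that] contractible_in_torus_iff_nullhomotopic
      dual_essential_iff_not_nullhomotopic[OF assms(1)] by blast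
  then show ?thesis
    by (metis (mono_tags, lifting) Collect_cong)
qed

end
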